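(* Let $R$ be an arbitrary associative ring with $1$, let $A,B\unlhd R$ be two-sided ideals, and let $n\ge 3$. Let $H\le \operatorname{GL}(n,R)$ be any subgroup such that $E(n,A)\le H\le \operatorname{GL}(n,R,A)$. Then $$ C_{\operatorname{GL}(n,R)}\big(H,\operatorname{GL}(n,R,B)\big)=C_{\Omega(A,B)}\big(n,R,(B:A)\big). $$
   Context: Commutators are left-normed: $[x,y]=xyx^{-1}y^{-1}$. For subgroups $F,H$ of a group $G$, the centraliser of $F$ modulo $H$ is $C_G(F,H)=\{g\in G\mid [f,g]\in H \text{ for all } f\in F\}$. For $\xi\in R$ and $1\le i\ne j\le n$, $t_{ij}(\xi)=e+\xi e_{ij}$ is the elementary transvection ($e$ the identity matrix, $e_{ij}$ the standard matrix unit). For an ideal $I\unlhd R$, $E(n,I)$ is the subgroup of $\operatorname{GL}(n,R)$ generated by all $t_{ij}(\xi)$ with $\xi\in I$, $1\le i\neq j\le n$, and $\operatorname{GL}(n,R,I)=\{g\in\operatorname{GL}(n,R)\mid g_{ij}\equiv\delta_{ij}\pmod I\}$ is the principal congruence subgroup (kernel of reduction modulo $I$). For two-sided ideals $A,B$, the ideal quotient is $(B:A)=\{x\in R\mid xA\subseteq B \text{ and } Ax\subseteq B\}$, a two-sided ideal. The relative centraliser of $A$ modulo $B$ is $\operatorname{Cent}_R(A,B)=\{x\in R\mid xa-ax\in B \text{ for all } a\in A\}$. Finally $$C_{\Omega(A,B)}(n,R,(B:A))=\{g\in\operatorname{GL}(n,R)\mid g_{ij}\in(B:A)\text{ and } g_{ii}-g_{jj}\in(B:A)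 \text{ for all } i\ne j,\ \text{and } g_{ii}\in\operatorname{Cent}_R(A,B)\text{ for all } i\}.$$ *)

theory Defs
  imports "HOL-Analysis.Analysis"
begin

text \<open>Square n x n matrices over an associative ring 'a with 1 (class ring_1, not
necessarily commutative), indexed by a finite type 'n with CARD('n) = n.\<close>

definition GL :: "('a::ring_1 ^ 'n ^ 'n) set" where
  "GL = {g. invertible g}"

definition minv :: "'a::ring_1 ^ 'n ^ 'n \<Rightarrow> 'a ^ 'n ^ 'n" where
  "minv g = (THE h. g ** h = mat 1 \<and> h ** g = mat 1)"

definition comm :: "'a::ring_1 ^ 'n ^ 'n \<Rightarrow> 'a ^ 'n ^ 'n \<Rightarrow> 'a ^ 'n ^ 'n" where
  "comm x y = x ** y ** minv x ** minv y"

definition ideal2 :: "'a::ring_1 set \<Rightarrow> bool" where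
  "ideal2 I \<longleftrightarrow> 0 \<in> I \<and> (\<forall>x\<in>I. \<forall>y\<in>I. x + y \<in> I) \<and> (\<forall>x\<in>I. - x \<in> I)
     \<and> (\<forall>x\<in>I. \<forall>r. r * x \<in> I \<and> x * r \<in> I)"

definition subgroup_GL :: "('a::ring_1 ^ 'n ^ 'n) set \<Rightarrow> bool" where
  "subgroup_GL H \<longleftrightarrow> H \<subseteq> GL \<and> mat 1 \<in> H \<and> (\<forall>x\<in>H. \<forall>y\<in>H. x ** y \<in> H)
     \<and> (\<forall>x\<in>H. minv x \<in> H)"

definition transv :: "'n \<Rightarrow> 'n \<Rightarrow> 'a::ring_1 \<Rightarrow> 'a ^ 'n ^ 'n" where
  "transv i j \<xi> = (\<chi> k l. (if k = l then 1 else 0) + (if k = i \<and> l = j then \<xi> else 0))"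

inductive_set En :: "'a::ring_1 set \<Rightarrow> ('a ^ 'n ^ 'n) set" for I where
  En_one: "mat 1 \<in> En I"
| En_gen: "\<xi> \<in> I \<Longrightarrow> i \<noteq> j \<Longrightarrow> transv i j \<xi> \<in> En I"
| En_mult: "x \<in> En I \<Longrightarrow> y \<in> En I \<Longrightarrow> x ** y \<in> En I"
| En_inv: "x \<in> En I \<Longrightarrow> minv x \<in> En I"

definition GLrel :: "'a::ring_1 set \<Rightarrow> ('a ^ 'n ^ 'n) set" where
  "GLrel I = {g \<in> GL. \<forall>i j. g $ i $ j - (if i = j then 1 else 0) \<in> I}"

definition centr :: "('a::ring_1 ^ 'n ^ 'n) set \<Rightarrow> ('a ^ 'n ^ 'n) set \<Rightarrow> ('a ^ 'n ^ 'n) set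
    \<Rightarrow> ('a ^ 'n ^ 'n) set" where
  "centr G F H = {g \<in> G. \<forall>f\<in>F. comm f g \<in> H}"

definition ideal_quot :: "'a::ring_1 set \<Rightarrow> 'a set \<Rightarrow> 'a set" where
  "ideal_quot B A = {x. (\<forall>a\<in>A. x * a \<in> B) \<and> (\<forall>a\<in>A. a * x \<in> B)}"

definition Cent :: "'a::ring_1 set \<Rightarrow> 'a set \<Rightarrow> 'a set" where
  "Cent A B = {x. \<forall>a\<in>A. x * a - a * x \<in> B}"

definition C_Omega :: "'a::ring_1 set \<Rightarrow> 'a set \<Rightarrow> ('a ^ 'n ^ 'n) set" where
  "C_Omega A B = {g \<in> GL.
      (\<forall>i j. i \<noteq> j \<longrightarrow> g $ i $ j \<in> ideal_quot B A \<and> g $ i $ i - g $ j $ j \<in> ideal_quot B A)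
    \<and> (\<forall>i. g $ i $ i \<in> Cent A B)}"

end

theory Submission
  imports Defs
begin

text \<open>For invertible \<open>f, g\<close> one has \<open>[f,g] - e = (fg - gf) f\<^sup>-\<^sup>1 g\<^sup>-\<^sup>1\<close>, so \<open>[f,g] \<in> GL(n,R,B)\<close>
  exactly when \<open>f\<close> and \<open>g\<close> commute modulo \<open>B\<close> entrywise. Commuting \<open>g\<close> with \<open>t\<^sub>i\<^sub>j(a)\<close>, \<open>a \<in> A\<close>,
  modulo \<open>B\<close> yields \<open>a g\<^sub>j\<^sub>l \<in> B\<close> for \<open>l \<noteq> j\<close>, \<open>g\<^sub>k\<^sub>i a \<in> B\<close> for \<open>k \<noteq> i\<close> and \<open>a g\<^sub>j\<^sub>j - g\<^sub>i\<^sub>i a \<in> B\<close>;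
  comparing the last condition for two pairs sharing a third index (this needs \<open>n \<ge> 3\<close>)
  separates it into \<open>g\<^sub>i\<^sub>i - g\<^sub>j\<^sub>j \<in> (B:A)\<close> and \<open>g\<^sub>i\<^sub>i \<in> Cent(A,B)\<close>. Conversely, writing
  \<open>h = e + x\<close> with \<open>x\<close> over \<open>A\<close>, \<open>hg - gh = xg - gx\<close>, and these conditions put every entry
  of \<open>xg - gx\<close> into \<open>B\<close>.\<close>

lemma ideal2_zero: "ideal2 I \<Longrightarrow> 0 \<in> I"
  unfolding ideal2_def by blast

lemma ideal2_add: "ideal2 I \<Longrightarrow> x \<in> I \<Longrightarrow> y \<in> I \<Longrightarrow> x + y \<in> I"
  unfolding ideal2_def by blast

lemma ideal2_uminus: "ideal2 I \<Longrightarrow> x \<in> I \<Longrightarrow> - x \<in> I"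
  unfolding ideal2_def by blast

lemma ideal2_diff: "ideal2 I \<Longrightarrow> x \<in> I \<Longrightarrow> y \<in> I \<Longrightarrow> x - y \<in> I"
  unfolding ideal2_def diff_conv_add_uminus by blast

lemma ideal2_mult_left: "ideal2 I \<Longrightarrow> x \<in> I \<Longrightarrow> r * x \<in> I"
  unfolding ideal2_def by blast

lemma ideal2_mult_right: "ideal2 I \<Longrightarrow> x \<in> I \<Longrightarrow> x * r \<in> I"
  unfolding ideal2_def by blast

lemma ideal2_sum:
  assumes "ideal2 I" and "\<And>x. x \<in> S \<Longrightarrow> f x \<in> I"
  shows "sum f S \<in> I"
proof (cases "finite S")
  case True
  then show ?thesis using assms(2)
    by (induction S rule: finite_induct) (simp_all add: ideal2_zero ideal2_add assms(1))
qed (simp add: ideal2_zero assms(1))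

definition entries_in :: "'a set \<Rightarrow> 'a ^ 'n ^ 'm \<Rightarrow> bool" where
  "entries_in I X \<longleftrightarrow> (\<forall>i j. X $ i $ j \<in> I)"

lemma entries_in_mult_left:
  "ideal2 I \<Longrightarrow> entries_in I X \<Longrightarrow> entries_in I (Y ** X)"
  unfolding entries_in_def matrix_matrix_mult_def
  by (auto intro!: ideal2_sum ideal2_mult_left)

lemma entries_in_mult_right:
  "ideal2 I \<Longrightarrow> entries_in I X \<Longrightarrow> entries_in I (X ** Y)"
  unfolding entries_in_def matrix_matrix_mult_def
  by (auto intro!: ideal2_sum ideal2_mult_right)

lemma GLrel_iff_entries_in: "g \<in> GLrel I \<longleftrightarrow> g \<in> GL \<and> entries_in I (g - mat 1)"
  by (simp add: GLrel_def entries_in_def mat_def)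

lemma matrix_diff_rdistrib: "((X::'a::ring_1 ^ 'n ^ 'm) - Y) ** Z = X ** Z - Y ** Z"
  by (simp add: matrix_matrix_mult_def vec_eq_iff sum_subtractf left_diff_distrib)

lemma matrix_diff_ldistrib: "(Z::'a::ring_1 ^ 'n ^ 'm) ** (X - Y) = Z ** X - Z ** Y"
  by (simp add: matrix_matrix_mult_def vec_eq_iff sum_subtractf right_diff_distrib)

lemma matrix_mul_minv:
  assumes "invertible (g::'a::ring_1 ^ 'n ^ 'n)"
  shows "g ** minv g = mat 1" and "minv g ** g = mat 1"
proof -
  obtain h where h: "g ** h = mat 1" "h ** g = mat 1"
    using assms invertible_def by blast
  have "minv g = h"
    unfolding minv_def
  proof (rule the_equality)
    fix h' assume "g ** h' = mat 1 \<and> h' ** g = mat 1"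
    then have "h' = h' ** (g ** h)" and "(h' ** g) ** h = h"
      using h by simp_all
    then show "h' = h" by (simp add: matrix_mul_assoc)
  qed (use h in blast)
  with h show "g ** minv g = mat 1" and "minv g ** g = mat 1" by simp_all
qed

lemma invertible_minv: "invertible (g::'a::ring_1 ^ 'n ^ 'n) \<Longrightarrow> invertible (minv g)"
  using matrix_mul_minv invertible_def by blast

lemma minv_mult_cancel:
  assumes "invertible (g::'a::ring_1 ^ 'n ^ 'n)"
  shows "minv g ** (g ** Z) = Z" and "g ** (minv g ** Z) = Z"
  by (simp_all only: matrix_mul_assoc matrix_mul_minv[OF assms] matrix_mul_lid)

lemma comm_minus_one:
  assumes "invertible (f::'a::ring_1 ^ 'n ^ 'n)" and "invertible g"
  shows "comm f g - mat 1 = (f ** g - g ** f) ** minv f ** minv g"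
proof -
  have "g ** f ** minv f ** minv g = mat 1"
    by (simp only: matrix_mul_assoc[symmetric] minv_mult_cancel(2)[OF assms(1)]
        matrix_mul_minv(1)[OF assms(2)])
  then show ?thesis
    by (simp add: comm_def matrix_diff_rdistrib)
qed

lemma comm_minus_one_mult:
  assumes "invertible (f::'a::ring_1 ^ 'n ^ 'n)" and "invertible g"
  shows "(comm f g - mat 1) ** g ** f = f ** g - g ** f"
proof -
  have "comm f g ** g ** f = f ** g"
    by (simp only: comm_def matrix_mul_assoc[symmetric] minv_mult_cancel(1)[OF assms(2)]
        matrix_mul_minv(2)[OF assms(1)] matrix_mul_rid)
  then show ?thesis
    by (simp add: matrix_diff_rdistrib)
qed

lemma comm_in_GLrel_iff:
  assumes "ideal2 B" and "invertible (f::'a::ring_1 ^ 'n ^ 'n)" and "invertible g"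
  shows "comm f g \<in> GLrel B \<longleftrightarrow> entries_in B (f ** g - g ** f)"
proof -
  have "comm f g \<in> GL"
    unfolding comm_def GL_def using assms(2,3) by (simp add: invertible_mult invertible_minv)
  then show ?thesis
    unfolding GLrel_iff_entries_in
    by (metis assms comm_minus_one comm_minus_one_mult entries_in_mult_right)
qed

lemma centr_GLrel_eq:
  assumes "ideal2 B" and "H \<subseteq> GL"
  shows "centr GL H (GLrel B) = {g \<in> GL. \<forall>f\<in>H. entries_in B (f ** g - g ** f)}"
  using assms comm_in_GLrel_iff unfolding centr_def GL_def by blast

lemma transv_mult_nth:
  "(transv i j a ** g) $ k $ l = g $ k $ l + (if k = i then a * g $ j $ l else 0)"
proof -
  have "(transv i j a ** g) $ k $ l = (\<Sum>m\<in>UNIV. (if m = k then g $ m $ l else 0)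
      + (if m = j then (if k = i then a * g $ j $ l else 0) else 0))"
    unfolding matrix_matrix_mult_def transv_def vec_lambda_beta
    by (rule sum.cong) (auto simp: distrib_right)
  then show ?thesis by (simp add: sum.distrib)
qed

lemma mult_transv_nth:
  "(g ** transv i j a) $ k $ l = g $ k $ l + (if l = j then g $ k $ i * a else 0)"
proof -
  have "(g ** transv i j a) $ k $ l = (\<Sum>m\<in>UNIV. (if m = l then g $ k $ m else 0)
      + (if m = i then (if l = j then g $ k $ i * a else 0) else 0))"
    unfolding matrix_matrix_mult_def transv_def vec_lambda_beta
    by (rule sum.cong) (auto simp: distrib_left)
  then show ?thesis by (simp add: sum.distrib)
qed

lemma transv_commutator_nth:
  "(transv i j a ** g - g ** transv i j a) $ k $ l
     = (if k = i then a * g $ j $ l else 0) - (if l = j then g $ k $ i * a else 0)"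
  by (simp add: transv_mult_nth mult_transv_nth)

lemma ex_index_neq2:
  assumes "CARD('n) \<ge> 3"
  shows "\<exists>r::'n. r \<noteq> p \<and> r \<noteq> q"
proof (rule ccontr)
  assume "\<not> ?thesis"
  then have "CARD('n) \<le> card {p, q}"
    by (intro card_mono) auto
  also have "\<dots> \<le> 2"
    by (simp add: card_insert_le_m1)
  finally show False using assms by simp
qed

lemma diagonal_conditions:
  fixes d :: "'n \<Rightarrow> 'a::ring_1"
  assumes "CARD('n) \<ge> 3" and "ideal2 B"
    and d: "\<And>i j. i \<noteq> j \<Longrightarrow> a * d j - d i * a \<in> B"
  shows "p \<noteq> q \<Longrightarrow> (d p - d q) * a \<in> B"
    and "p \<noteq> q \<Longrightarrow> a * (d p - d q) \<in> B"
    and "d p * a - a * d p \<in> B"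
proof -
  show diff_right: "(d p - d q) * a \<in> B" if "p \<noteq> q" for p q
  proof -
    obtain r where "r \<noteq> p" "r \<noteq> q" using ex_index_neq2[OF assms(1)] by blast
    have "(d p - d q) * a = (a * d r - d q * a) - (a * d r - d p * a)"
      by (simp add: algebra_simps)
    also have "\<dots> \<in> B"
      using \<open>r \<noteq> p\<close> \<open>r \<noteq> q\<close> by (intro ideal2_diff[OF assms(2)] d) auto
    finally show ?thesis .
  qed
  show "a * (d p - d q) \<in> B" if "p \<noteq> q"
  proof -
    obtain r where "r \<noteq> p" "r \<noteq> q" using ex_index_neq2[OF assms(1)] by blast
    have "a * (d p - d q) = (a * d p - d r * a) - (a * d q - d r * a)"
      by (simp add: algebra_simps)
    also have "\<dots> \<in> B"
      using \<open>r \<noteq> p\<close> \<open>r \<noteq> q\<close> by (intro ideal2_diff[OF assms(2)] d) auto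
    finally show ?thesis .
  qed
  obtain q where "q \<noteq> p" using ex_index_neq2[OF assms(1)] by blast
  have "d p * a - a * d p = (d p - d q) * a - (a * d p - d q * a)"
    by (simp add: algebra_simps)
  also have "\<dots> \<in> B"
    using \<open>q \<noteq> p\<close> by (intro ideal2_diff[OF assms(2)] diff_right d) auto
  finally show "d p * a - a * d p \<in> B" .
qed

lemma C_Omega_if_commutes_mod_transv:
  fixes g :: "'a::ring_1 ^ 'n ^ 'n"
  assumes "CARD('n) \<ge> 3" and "ideal2 B" and "g \<in> GL"
    and comm: "\<And>i j a. i \<noteq> j \<Longrightarrow> a \<in> A
      \<Longrightarrow> entries_in B (transv i j a ** g - g ** transv i j a)"
  shows "g \<in> C_Omega A B"
proof -
  have entry: "(if k = i then a * g $ j $ l else 0) - (if l = j then g $ k $ i * a else 0) \<in> B"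
    if "i \<noteq> j" "a \<in> A" for i j a k l
    using comm[OF that] unfolding entries_in_def transv_commutator_nth by blast
  have row: "a * g $ j $ l \<in> B" if "j \<noteq> l" "a \<in> A" for j l a
  proof -
    obtain i where "i \<noteq> j" using ex_index_neq2[OF assms(1)] by blast
    with that show ?thesis using entry[of i j a i l] by simp
  qed
  have column: "g $ k $ i * a \<in> B" if "k \<noteq> i" "a \<in> A" for k i a
  proof -
    obtain j where "j \<noteq> i" using ex_index_neq2[OF assms(1)] by blast
    with that have "- (g $ k $ i * a) \<in> B" using entry[of i j a k j] by simp
    then show ?thesis using ideal2_uminus[OF assms(2)] by fastforce
  qed
  have diag: "a * g $ j $ j - g $ i $ i * a \<in> B" if "i \<noteq> j" "a \<in> A" for i j a
    using entry[OF that, of i j] that(1) by simp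
  note diagonal = diagonal_conditions[OF assms(1,2), where d = "\<lambda>i. g $ i $ i", OF diag]
  show ?thesis
    unfolding C_Omega_def ideal_quot_def Cent_def
    using assms(3) row column diagonal by auto
qed

lemma commutes_mod_if_C_Omega:
  fixes g x :: "'a::ring_1 ^ 'n ^ 'n"
  assumes "ideal2 B" and g: "g \<in> C_Omega A B" and x: "entries_in A x"
  shows "entries_in B (x ** g - g ** x)"
  unfolding entries_in_def
proof (intro allI)
  fix i j
  have quot: "k \<noteq> l \<Longrightarrow> g $ k $ l \<in> ideal_quot B A"
    and diag_quot: "k \<noteq> l \<Longrightarrow> g $ k $ k - g $ l $ l \<in> ideal_quot B A"
    and cent: "g $ k $ k \<in> Cent A B" for k l
    using g by (auto simp: C_Omega_def)
  have x_in: "x $ k $ l \<in> A" for k l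
    using x by (simp add: entries_in_def)
  let ?S1 = "\<Sum>k\<in>UNIV - {j}. x $ i $ k * g $ k $ j"
  let ?S2 = "\<Sum>k\<in>UNIV - {i}. g $ i $ k * x $ k $ j"
  have "(x ** g) $ i $ j = x $ i $ j * g $ j $ j + ?S1"
    by (simp add: matrix_matrix_mult_def sum.remove[of UNIV j])
  moreover have "(g ** x) $ i $ j = g $ i $ i * x $ i $ j + ?S2"
    by (simp add: matrix_matrix_mult_def sum.remove[of UNIV i])
  ultimately have "(x ** g - g ** x) $ i $ j
      = (x $ i $ j * g $ j $ j - g $ i $ i * x $ i $ j) + (?S1 - ?S2)"
    by (simp add: algebra_simps)
  moreover have "?S1 \<in> B" and "?S2 \<in> B"
    by (rule ideal2_sum[OF assms(1)], use quot x_in in \<open>auto simp: ideal_quot_def\<close>)+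
  moreover have "x $ i $ j * g $ j $ j - g $ i $ i * x $ i $ j \<in> B"
  proof -
    have "x $ i $ j * g $ j $ j - g $ i $ i * x $ i $ j
        = - (g $ j $ j * x $ i $ j - x $ i $ j * g $ j $ j) + (g $ j $ j - g $ i $ i) * x $ i $ j"
      by (simp add: algebra_simps)
    also have "\<dots> \<in> B"
    proof (rule ideal2_add[OF assms(1)])
      show "- (g $ j $ j * x $ i $ j - x $ i $ j * g $ j $ j) \<in> B"
        using cent[of j] x_in[of i j] by (intro ideal2_uminus[OF assms(1)]) (simp add: Cent_def)
      show "(g $ j $ j - g $ i $ i) * x $ i $ j \<in> B"
        using diag_quot[of j i] x_in[of i j] ideal2_zero[OF assms(1)]
        by (cases "i = j") (simp_all add: ideal_quot_def)
    qed
    finally show ?thesis .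
  qed
  ultimately show "(x ** g - g ** x) $ i $ j \<in> B"
    by (simp add: ideal2_add[OF assms(1)] ideal2_diff[OF assms(1)])
qed

theorem theorem1:
  fixes A B :: "'a::ring_1 set"
    and H :: "('a ^ 'n ^ 'n) set"
  assumes "CARD('n) \<ge> 3"
    and "ideal2 A" and "ideal2 B"
    and "subgroup_GL H"
    and "En A \<subseteq> H" and "H \<subseteq> GLrel A"
  shows "centr GL H (GLrel B) = C_Omega A B"
proof -
  have "H \<subseteq> GL" using assms(4) by (simp add: subgroup_GL_def)
  have "g \<in> C_Omega A B"
    if "g \<in> GL" and "\<forall>f\<in>H. entries_in B (f ** g - g ** f)" for g
  proof (rule C_Omega_if_commutes_mod_transv[OF assms(1,3) \<open>g \<in> GL\<close>])
    fix i j :: 'n and a :: 'a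
    assume "i \<noteq> j" and "a \<in> A"
    then have "transv i j a \<in> H" using assms(5) En_gen by blast
    then show "entries_in B (transv i j a ** g - g ** transv i j a)" using that(2) by blast
  qed
  moreover have "entries_in B (f ** g - g ** f)" if "g \<in> C_Omega A B" and "f \<in> H" for f g
  proof -
    have "entries_in A (f - mat 1)"
      using that(2) assms(6) GLrel_iff_entries_in by blast
    then have "entries_in B ((f - mat 1) ** g - g ** (f - mat 1))"
      using commutes_mod_if_C_Omega[OF assms(3) that(1)] by blast
    then show ?thesis by (simp add: matrix_diff_rdistrib matrix_diff_ldistrib)
  qed
  moreover have "C_Omega A B \<subseteq> GL"
    unfolding C_Omega_def by blast
  ultimately show ?thesis
    unfolding centr_GLrel_eq[OF assms(3) \<open>H \<subseteq> GL\<close>] by blast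
qed

end
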